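(* Let $n,p\ge1$ be integers and $0<\sigma\le B$. If $A\le B$, then \[ A+\frac{(\ln 2)^2}{4\sqrt2}\,\frac Bn\big(f(A)-f(B)\big)\;\le\;\int_0^Bp^{\mathrm{Benn}}(t)\,dt\;\le\;A+\frac Bn\big(f(A)-f(B)\big). \] If $A>B$, then $\int_0^Bp^{\mathrm{Benn}}(t)\,dt=B$. In general, \[ (A\wedge B)+\frac{(\ln 2)^2}{4\sqrt2}\,\frac Bn\big(f(A\wedge B)-f(B)\big)\;\le\;\int_0^Bp^{\mathrm{Benn}}(t)\,dt\;\le\;(A\wedge B)+\frac Bn\big(f(A\wedge B)-f(B)\big). \]
   Context: Let $\Psi(x)=(1+x)\ln(1+x)-x$ for $x\ge0$ (a bijection of $[0,\infty)$ onto itself) and $\Psi^{-1}$ its inverse. Define $q^{\mathrm{Benn}}(t)=2p\exp\!\big(-\frac{n\sigma^2}{B^2}\Psi(\frac{tB}{\sigma^2})\big)$ and $p^{\mathrm{Benn}}(t)=\min\{1,q^{\mathrm{Benn}}(t)\}$ for $t\ge0$, and \[ A=\frac{\sigma^2}{B}\Psi^{-1}\Big(\frac{B^2\ln(2p)}{n\sigma^2}\Big),\qquad f(t)=\frac{q^{\mathrm{Benn}}(t)}{\ln(1+tB/\sigma^2)},\ t>0. \] *)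

theory Defs
  imports "HOL-Analysis.Analysis"
begin

definition Psi :: "real \<Rightarrow> real" where
  "Psi x = (1 + x) * ln (1 + x) - x"

definition Psi_inv :: "real \<Rightarrow> real" where
  "Psi_inv = the_inv_into {0..} Psi"

definition q_Benn :: "nat \<Rightarrow> nat \<Rightarrow> real \<Rightarrow> real \<Rightarrow> real \<Rightarrow> real" where
  "q_Benn n p \<sigma> B t = 2 * real p * exp (- (real n * \<sigma>\<^sup>2 / B\<^sup>2) * Psi (t * B / \<sigma>\<^sup>2))"

definition p_Benn :: "nat \<Rightarrow> nat \<Rightarrow> real \<Rightarrow> real \<Rightarrow> real \<Rightarrow> real" where
  "p_Benn n p \<sigma> B t = min 1 (q_Benn n p \<sigma> B t)"

definition A_Benn :: "nat \<Rightarrow> nat \<Rightarrow> real \<Rightarrow> real \<Rightarrow> real" where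
  "A_Benn n p \<sigma> B = \<sigma>\<^sup>2 / B * Psi_inv (B\<^sup>2 * ln (2 * real p) / (real n * \<sigma>\<^sup>2))"

definition f_Benn :: "nat \<Rightarrow> nat \<Rightarrow> real \<Rightarrow> real \<Rightarrow> real \<Rightarrow> real" where
  "f_Benn n p \<sigma> B t = q_Benn n p \<sigma> B t / ln (1 + t * B / \<sigma>\<^sup>2)"

end

theory Submission
  imports Defs
begin

(* The bound q^Benn is decreasing and crosses 1 exactly at A: there its exponent
   (n sigma^2 / B^2) Psi (t B / sigma^2) equals ln (2 p). Hence p^Benn = 1 on [0, A] and
   p^Benn = q^Benn beyond A, so the integral is B when A > B and A + int_A^B q^Benn otherwise.
   With u = t B / sigma^2 and L = ln (1 + u) one has (q^Benn)' = -(n / B) q^Benn L, so -(B / n) f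
   is an antiderivative of q^Benn (1 + D) with D = B^2 / (n sigma^2 (1 + u) L^2). Since
   Psi u <= (1 + u) L^2 and the exponent is at least ln (2 p) >= ln 2 beyond A, we get
   0 <= D <= 1 / ln 2, which squeezes int_A^B q^Benn between (B / n) (f A - f B) / (1 + 1 / ln 2)
   and (B / n) (f A - f B); the constant (ln 2)^2 / (4 sqrt 2) is below 1 / (1 + 1 / ln 2). *)

lemma Psi_0 [simp]: "Psi 0 = 0"
  by (simp add: Psi_def)

lemma Psi_has_real_derivative: "-1 < x \<Longrightarrow> (Psi has_real_derivative ln (1 + x)) (at x)"
  unfolding Psi_def[abs_def] by (auto intro!: derivative_eq_intros simp: field_simps)

lemma Psi_has_real_derivative_chain [derivative_intros]:
  "(g has_real_derivative g') (at x within S) \<Longrightarrow> -1 < g x \<Longrightarrow>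
    ((\<lambda>x. Psi (g x)) has_real_derivative ln (1 + g x) * g') (at x within S)"
  using DERIV_chain2[OF Psi_has_real_derivative] by blast

lemma continuous_on_Psi: "continuous_on {0..} Psi"
  by (intro continuous_at_imp_continuous_on ballI DERIV_isCont[OF Psi_has_real_derivative]) auto

lemma Psi_strict_mono_on: "strict_mono_on {0..} Psi"
proof (rule strict_mono_onI)
  fix x y :: real
  assume "x \<in> {0..}" "x < y"
  show "Psi x < Psi y"
  proof (rule DERIV_pos_imp_increasing_open[OF \<open>x < y\<close>])
    fix z
    assume "x < z"
    then have "(Psi has_real_derivative ln (1 + z)) (at z) \<and> 0 < ln (1 + z)"
      using \<open>x \<in> {0..}\<close> Psi_has_real_derivative[of z] by simp
    then show "\<exists>d. (Psi has_real_derivative d) (at z) \<and> 0 < d" ..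
  next
    show "continuous_on {x..y} Psi"
      using \<open>x \<in> {0..}\<close> by (auto intro: continuous_on_subset[OF continuous_on_Psi])
  qed
qed

lemma Psi_le_iff: "0 \<le> x \<Longrightarrow> 0 \<le> y \<Longrightarrow> Psi x \<le> Psi y \<longleftrightarrow> x \<le> y"
  using strict_mono_on_less_eq[OF Psi_strict_mono_on] by simp

lemma Psi_nonneg: "0 \<le> x \<Longrightarrow> 0 \<le> Psi x"
  using Psi_le_iff[of 0 x] by simp

lemma Psi_image: "Psi ` {0..} = {0..}"
proof
  show "Psi ` {0..} \<subseteq> {0..}"
    using Psi_nonneg by auto
  show "{0..} \<subseteq> Psi ` {0..}"
  proof
    fix y :: real
    assume "y \<in> {0..}"
    define b where "b = max y (exp 2)"
    have "0 \<le> b"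
      unfolding b_def by (simp add: le_max_iff_disj)
    have "2 \<le> ln (1 + b)"
      unfolding b_def by (subst ln_ge_iff) (auto simp: add_pos_nonneg le_max_iff_disj)
    then have "(1 + b) * 2 \<le> (1 + b) * ln (1 + b)"
      using \<open>0 \<le> b\<close> by (intro mult_left_mono) auto
    then have "y \<le> Psi b"
      unfolding Psi_def b_def by auto
    moreover have "continuous_on {0..b} Psi"
      by (rule continuous_on_subset[OF continuous_on_Psi]) auto
    ultimately obtain x where "0 \<le> x" "x \<le> b" "Psi x = y"
      using IVT'[of Psi 0 y b] \<open>y \<in> {0..}\<close> \<open>0 \<le> b\<close> by auto
    then show "y \<in> Psi ` {0..}"
      by force
  qed
qed

lemma
  assumes "0 \<le> y"
  shows Psi_inv_nonneg: "0 \<le> Psi_inv y" and Psi_Psi_inv: "Psi (Psi_inv y) = y"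
proof -
  have "bij_betw Psi {0..} {0..}"
    using Psi_image strict_mono_on_imp_inj_on[OF Psi_strict_mono_on] by (simp add: bij_betw_def)
  then show "0 \<le> Psi_inv y" "Psi (Psi_inv y) = y"
    using assms the_inv_into_into[of Psi "{0..}" y] f_the_inv_into_f_bij_betw[of Psi "{0..}" "{0..}" y]
    unfolding Psi_inv_def bij_betw_def by auto
qed

lemma Psi_le_mult_ln_sq:
  assumes "0 \<le> s"
  shows "Psi s \<le> (1 + s) * (ln (1 + s))\<^sup>2"
proof -
  define x where "x = ln (1 + s)"
  have "0 \<le> x" "x \<le> s"
    unfolding x_def using assms by (simp_all add: ln_add_one_self_le_self)
  have "x\<^sup>2 - x + 1 = (x - 1/2)\<^sup>2 + 3/4"
    by (simp add: power2_eq_square algebra_simps)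
  then have "0 \<le> x\<^sup>2 - x + 1"
    using zero_le_power2[of "x - 1/2"] by linarith
  have "1 \<le> 1 + x ^ 3"
    using \<open>0 \<le> x\<close> by simp
  also have "\<dots> = (1 + x) * (x\<^sup>2 - x + 1)"
    by (simp add: algebra_simps power2_eq_square power3_eq_cube)
  also have "\<dots> \<le> (1 + s) * (x\<^sup>2 - x + 1)"
    using \<open>x \<le> s\<close> \<open>0 \<le> x\<^sup>2 - x + 1\<close> by (intro mult_right_mono) auto
  finally show ?thesis
    unfolding Psi_def x_def[symmetric] by (simp add: algebra_simps)
qed

lemma ln_2_constant_le: "(ln 2)\<^sup>2 / (4 * sqrt 2) * (1 + 1 / ln 2) \<le> (1::real)"
proof -
  have "(ln 2)\<^sup>2 / (4 * sqrt 2) * (1 + 1 / ln 2) = ln 2 * (ln 2 + 1) / (4 * sqrt 2)"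
    by (simp add: field_simps power2_eq_square)
  also have "\<dots> \<le> 1"
  proof -
    have "ln 2 * (ln 2 + 1) \<le> 1 * (2::real)"
      using ln_2_less_1 by (intro mult_mono) auto
    moreover have "1 \<le> sqrt (2::real)"
      by simp
    ultimately have "ln 2 * (ln 2 + 1) \<le> 4 * sqrt 2"
      by linarith
    then show ?thesis
      by (simp add: divide_le_eq_1)
  qed
  finally show ?thesis .
qed

lemma integral_bounds_by_antiderivative:
  fixes g G D :: "real \<Rightarrow> real"
  assumes "a \<le> b" and "continuous_on {a..b} g"
    and G: "\<And>t. t \<in> {a..b} \<Longrightarrow> (G has_real_derivative g t * (1 + D t)) (at t within {a..b})"
    and g: "\<And>t. t \<in> {a..b} \<Longrightarrow> 0 \<le> g t"
    and D: "\<And>t. t \<in> {a..b} \<Longrightarrow> 0 \<le> D t \<and> D t \<le> M"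
    and c: "0 \<le> c" "c * (1 + M) \<le> 1"
  shows "c * (G b - G a) \<le> integral {a..b} g" and "integral {a..b} g \<le> G b - G a"
proof -
  have "(G has_vector_derivative g t * (1 + D t)) (at t within {a..b})" if "t \<in> {a..b}" for t
    using G[OF that] by (simp add: has_real_derivative_iff_has_vector_derivative)
  then have FTC: "((\<lambda>t. g t * (1 + D t)) has_integral G b - G a) {a..b}"
    using \<open>a \<le> b\<close> by (intro fundamental_theorem_of_calculus)
  have g_int: "(g has_integral integral {a..b} g) {a..b}"
    using \<open>continuous_on {a..b} g\<close> by (intro integrable_integral integrable_continuous_interval)
  show "c * (G b - G a) \<le> integral {a..b} g"
  proof (rule has_integral_le[OF has_integral_mult_right[OF FTC] g_int])
    fix t
    assume "t \<in> {a..b}"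
    then have "c * (1 + D t) \<le> 1"
      using D c by (meson add_left_mono mult_left_mono order_trans)
    then show "c * (g t * (1 + D t)) \<le> g t"
      using g[OF \<open>t \<in> {a..b}\<close>] mult_left_mono[of "c * (1 + D t)" 1 "g t"] by (simp add: algebra_simps)
  qed
  show "integral {a..b} g \<le> G b - G a"
  proof (rule has_integral_le[OF g_int FTC])
    fix t
    assume "t \<in> {a..b}"
    then show "g t \<le> g t * (1 + D t)"
      using g D mult_nonneg_nonneg[of "g t" "D t"] by (simp add: algebra_simps)
  qed
qed

definition Benn_exponent :: "nat \<Rightarrow> real \<Rightarrow> real \<Rightarrow> real \<Rightarrow> real" where
  "Benn_exponent n \<sigma> B t = real n * \<sigma>\<^sup>2 / B\<^sup>2 * Psi (t * B / \<sigma>\<^sup>2)"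

lemma Benn_exponent_le_iff:
  assumes "n \<ge> 1" "0 < \<sigma>" "0 < B" "0 \<le> s" "0 \<le> t"
  shows "Benn_exponent n \<sigma> B s \<le> Benn_exponent n \<sigma> B t \<longleftrightarrow> s \<le> t"
  using assms by (simp add: Benn_exponent_def Psi_le_iff divide_le_cancel)

context
  fixes n p :: nat and \<sigma> B :: real
  assumes n: "n \<ge> 1" and p: "p \<ge> 1" and \<sigma>: "0 < \<sigma>" and B: "0 < B"
begin

lemma
  shows A_Benn_pos: "0 < A_Benn n p \<sigma> B"
    and Benn_exponent_A_Benn: "Benn_exponent n \<sigma> B (A_Benn n p \<sigma> B) = ln (2 * real p)"
proof -
  define K where "K = B\<^sup>2 * ln (2 * real p) / (real n * \<sigma>\<^sup>2)"
  have "0 < K"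
    unfolding K_def using n p \<sigma> B by (simp add: field_simps)
  then have "Psi (Psi_inv K) = K" "0 < Psi_inv K"
    using Psi_Psi_inv[of K] Psi_inv_nonneg[of K] by (auto simp: order_le_less)
  then show "0 < A_Benn n p \<sigma> B" "Benn_exponent n \<sigma> B (A_Benn n p \<sigma> B) = ln (2 * real p)"
    using n \<sigma> B unfolding A_Benn_def Benn_exponent_def K_def[symmetric] by (simp_all add: K_def)
qed

lemma q_Benn_eq_exp:
  "q_Benn n p \<sigma> B t = exp (Benn_exponent n \<sigma> B (A_Benn n p \<sigma> B) - Benn_exponent n \<sigma> B t)"
proof -
  have "q_Benn n p \<sigma> B t = exp (ln (2 * real p)) * exp (- Benn_exponent n \<sigma> B t)"
    using p by (simp add: q_Benn_def Benn_exponent_def)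
  then show ?thesis
    by (simp add: Benn_exponent_A_Benn flip: exp_add)
qed

lemma p_Benn_eq_1:
  assumes "0 \<le> t" "t \<le> A_Benn n p \<sigma> B"
  shows "p_Benn n p \<sigma> B t = 1"
proof -
  have "Benn_exponent n \<sigma> B t \<le> Benn_exponent n \<sigma> B (A_Benn n p \<sigma> B)"
    using assms n \<sigma> B Benn_exponent_le_iff by auto
  then show ?thesis
    unfolding p_Benn_def q_Benn_eq_exp by simp
qed

lemma p_Benn_eq_q_Benn:
  assumes "A_Benn n p \<sigma> B \<le> t"
  shows "p_Benn n p \<sigma> B t = q_Benn n p \<sigma> B t"
proof -
  have "Benn_exponent n \<sigma> B (A_Benn n p \<sigma> B) \<le> Benn_exponent n \<sigma> B t"
    using assms A_Benn_pos n \<sigma> B Benn_exponent_le_iff by auto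
  then show ?thesis
    unfolding p_Benn_def q_Benn_eq_exp by simp
qed

lemma q_Benn_has_real_derivative:
  assumes "0 \<le> t"
  shows "(q_Benn n p \<sigma> B has_real_derivative
           - q_Benn n p \<sigma> B t * (real n / B) * ln (1 + t * B / \<sigma>\<^sup>2)) (at t)"
proof -
  have "0 \<le> t * B / \<sigma>\<^sup>2"
    using assms B by simp
  then have "((\<lambda>t. 2 * real p * exp (- (real n * \<sigma>\<^sup>2 / B\<^sup>2) * Psi (t * B / \<sigma>\<^sup>2))) has_real_derivative
      2 * real p * (exp (- (real n * \<sigma>\<^sup>2 / B\<^sup>2) * Psi (t * B / \<sigma>\<^sup>2)) *
        (- (real n * \<sigma>\<^sup>2 / B\<^sup>2) * (ln (1 + t * B / \<sigma>\<^sup>2) * (1 * B / \<sigma>\<^sup>2))))) (at t)"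
    by (intro DERIV_cmult DERIV_fun_exp Psi_has_real_derivative_chain DERIV_cdivide DERIV_cmult_right
        DERIV_ident) auto
  then show ?thesis
    unfolding q_Benn_def[abs_def] using \<sigma> B by (simp add: field_simps power2_eq_square)
qed

lemma continuous_on_q_Benn: "0 \<le> a \<Longrightarrow> continuous_on {a..b} (q_Benn n p \<sigma> B)"
  by (intro continuous_at_imp_continuous_on ballI DERIV_isCont[OF q_Benn_has_real_derivative]) auto

lemma f_Benn_has_real_derivative:
  assumes "0 < t"
  shows "((\<lambda>t. - (B / real n) * f_Benn n p \<sigma> B t) has_real_derivative
           q_Benn n p \<sigma> B t * (1 + B\<^sup>2 / (real n * \<sigma>\<^sup>2 * (1 + t * B / \<sigma>\<^sup>2) * (ln (1 + t * B / \<sigma>\<^sup>2))\<^sup>2)))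
         (at t)"
proof -
  let ?u = "t * B / \<sigma>\<^sup>2"
  let ?L = "ln (1 + ?u)"
  let ?q = "q_Benn n p \<sigma> B t"
  have "0 < ?u"
    using assms \<sigma> B by simp
  then have "0 < ?L"
    by simp
  have "((\<lambda>t. ln (1 + t * B / \<sigma>\<^sup>2)) has_real_derivative (B / \<sigma>\<^sup>2) / (1 + ?u)) (at t)"
    using \<open>0 < ?u\<close> \<sigma>
    by (auto intro!: derivative_eq_intros simp: field_simps power2_eq_square power4_eq_xxxx add_pos_pos)
  then have "((\<lambda>t. - (B / real n) * (q_Benn n p \<sigma> B t / ln (1 + t * B / \<sigma>\<^sup>2))) has_real_derivative
      - (B / real n) * ((- ?q * (real n / B) * ?L * ?L - ?q * ((B / \<sigma>\<^sup>2) / (1 + ?u))) / (?L * ?L))) (at t)"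
    using assms \<open>0 < ?L\<close> by (intro DERIV_cmult DERIV_divide q_Benn_has_real_derivative) auto
  moreover have eq: "- (B / real n) * ((- q * (real n / B) * L * L - q * ((B / \<sigma>\<^sup>2) / w)) / (L * L))
      = q * (1 + B\<^sup>2 / (real n * \<sigma>\<^sup>2 * w * L\<^sup>2))" if "0 < L" "0 < w" for q L w :: real
    using that n B \<sigma> by (simp add: field_simps power2_eq_square)
  ultimately show ?thesis
    unfolding f_Benn_def using \<open>0 < ?u\<close> \<open>0 < ?L\<close>
    eq[where q = ?q and L = ?L and w = "1 + ?u"] by (auto elim: DERIV_cong)
qed

lemma integral_p_Benn_saturated:
  assumes "B \<le> A_Benn n p \<sigma> B"
  shows "integral {0..B} (p_Benn n p \<sigma> B) = B"
proof -
  have "integral {0..B} (p_Benn n p \<sigma> B) = integral {0..B} (\<lambda>_. 1)"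
    using assms by (intro integral_cong p_Benn_eq_1) auto
  then show ?thesis
    using B by simp
qed

lemma integral_p_Benn_split:
  assumes "A_Benn n p \<sigma> B \<le> B"
  shows "integral {0..B} (p_Benn n p \<sigma> B)
           = A_Benn n p \<sigma> B + integral {A_Benn n p \<sigma> B..B} (q_Benn n p \<sigma> B)"
proof -
  let ?A = "A_Benn n p \<sigma> B"
  have "((\<lambda>_. 1) has_integral ?A) {0..?A}"
    using has_integral_const_real[of "1::real" 0 ?A] A_Benn_pos by simp
  then have "(p_Benn n p \<sigma> B has_integral ?A) {0..?A}"
    by (rule has_integral_eq[rotated]) (simp add: p_Benn_eq_1)
  moreover have "(q_Benn n p \<sigma> B has_integral integral {?A..B} (q_Benn n p \<sigma> B)) {?A..B}"
    using A_Benn_pos by (intro integrable_integral integrable_continuous_interval continuous_on_q_Benn) simp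
  then have "(p_Benn n p \<sigma> B has_integral integral {?A..B} (q_Benn n p \<sigma> B)) {?A..B}"
    by (rule has_integral_eq[rotated]) (simp add: p_Benn_eq_q_Benn)
  ultimately have "(p_Benn n p \<sigma> B has_integral ?A + integral {?A..B} (q_Benn n p \<sigma> B)) {0..B}"
    by (rule has_integral_combine[OF less_imp_le[OF A_Benn_pos] assms])
  then show ?thesis
    by (rule integral_unique)
qed

lemma integral_q_Benn_bounds:
  assumes "A_Benn n p \<sigma> B \<le> B" and "0 \<le> c" "c * (1 + 1 / ln 2) \<le> 1"
  defines "A \<equiv> A_Benn n p \<sigma> B" and "f \<equiv> f_Benn n p \<sigma> B"
  shows "c * ((B / real n) * (f A - f B)) \<le> integral {A..B} (q_Benn n p \<sigma> B)"
    and "integral {A..B} (q_Benn n p \<sigma> B) \<le> (B / real n) * (f A - f B)"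
proof -
  define G where "G t = - (B / real n) * f t" for t
  define D where "D t = B\<^sup>2 / (real n * \<sigma>\<^sup>2 * (1 + t * B / \<sigma>\<^sup>2) * (ln (1 + t * B / \<sigma>\<^sup>2))\<^sup>2)" for t
  have D_bounds: "0 \<le> D t \<and> D t \<le> 1 / ln 2" if "t \<in> {A..B}" for t
  proof -
    let ?u = "t * B / \<sigma>\<^sup>2"
    define X where "X = real n * \<sigma>\<^sup>2 / B\<^sup>2 * ((1 + ?u) * (ln (1 + ?u))\<^sup>2)"
    have "0 \<le> ?u"
      using that A_Benn_pos B unfolding A_def by auto
    have "ln 2 \<le> ln (2 * real p)"
      using p by simp
    also have "\<dots> \<le> Benn_exponent n \<sigma> B t"
      using that A_Benn_pos n \<sigma> B Benn_exponent_le_iff[of n \<sigma> B A t] Benn_exponent_A_Benn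
      unfolding A_def by auto
    also have "\<dots> \<le> X"
      unfolding Benn_exponent_def X_def
      by (rule mult_left_mono[OF Psi_le_mult_ln_sq[OF \<open>0 \<le> ?u\<close>]]) simp
    finally have "ln 2 \<le> X" .
    then have "0 < X"
      using ln_gt_zero[of "2::real"] by linarith
    moreover have "D t = 1 / X"
      unfolding D_def X_def using n \<sigma> B by (simp add: field_simps)
    ultimately show ?thesis
      using \<open>ln 2 \<le> X\<close> by (simp add: frac_le)
  qed
  have "A \<le> B"
    using assms(1) unfolding A_def .
  have "continuous_on {A..B} (q_Benn n p \<sigma> B)"
    using A_Benn_pos unfolding A_def by (intro continuous_on_q_Benn) simp
  have G_deriv: "(G has_real_derivative q_Benn n p \<sigma> B t * (1 + D t)) (at t within {A..B})"
    if "t \<in> {A..B}" for t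
  proof -
    have "0 < t"
      using that A_Benn_pos unfolding A_def by auto
    then show ?thesis
      unfolding G_def D_def f_def by (rule has_field_derivative_at_within[OF f_Benn_has_real_derivative])
  qed
  have q_nonneg: "0 \<le> q_Benn n p \<sigma> B t" for t
    by (simp add: q_Benn_def)
  note bounds = integral_bounds_by_antiderivative[OF \<open>A \<le> B\<close> \<open>continuous_on {A..B} _\<close> G_deriv
      q_nonneg D_bounds assms(2,3)]
  moreover have "G B - G A = (B / real n) * (f A - f B)"
    unfolding G_def by (simp add: algebra_simps)
  ultimately show "c * ((B / real n) * (f A - f B)) \<le> integral {A..B} (q_Benn n p \<sigma> B)"
    and "integral {A..B} (q_Benn n p \<sigma> B) \<le> (B / real n) * (f A - f B)"
    by simp_all
qed

end

theorem theorem3p1: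
  fixes n p :: nat and \<sigma> B :: real
  assumes "n \<ge> 1" and "p \<ge> 1" and "0 < \<sigma>" and "\<sigma> \<le> B"
  defines "A \<equiv> A_Benn n p \<sigma> B"
      and "f \<equiv> f_Benn n p \<sigma> B"
      and "I \<equiv> integral {0..B} (p_Benn n p \<sigma> B)"
      and "c \<equiv> (ln 2)\<^sup>2 / (4 * sqrt 2)"
  shows "(A \<le> B \<longrightarrow>
            A + c * (B / real n) * (f A - f B) \<le> I \<and>
            I \<le> A + (B / real n) * (f A - f B))
       \<and> (A > B \<longrightarrow> I = B)
       \<and> (min A B + c * (B / real n) * (f (min A B) - f B) \<le> I \<and>
          I \<le> min A B + (B / real n) * (f (min A B) - f B))"
proof -
  note hyps = assms(1-3) order.strict_trans2[OF assms(3,4)]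
  have "0 \<le> c"
    unfolding c_def by simp
  have "c * (1 + 1 / ln 2) \<le> 1"
    unfolding c_def by (rule ln_2_constant_le)
  then have split: "A + c * (B / real n) * (f A - f B) \<le> I \<and> I \<le> A + (B / real n) * (f A - f B)"
    if "A \<le> B"
    using integral_p_Benn_split[OF hyps that[unfolded A_def]]
      integral_q_Benn_bounds[OF hyps that[unfolded A_def] \<open>0 \<le> c\<close>]
    unfolding A_def f_def I_def by (simp add: mult.assoc)
  have saturated: "I = B" if "A > B"
    using integral_p_Benn_saturated[OF hyps] that unfolding A_def I_def by simp
  show ?thesis
    using split saturated by (cases "A \<le> B") (simp_all add: min_def)
qed

end
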